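(* Let $n\ge 2$, $b\ge 2$ and $1\le r<b$ be integers with $n\ge b-r-1$. Then $\chi(G_{nb+r,b})=n+1$. More precisely, with $k=n-b+r+1$, the vertex set $\{0,1,\ldots,nb+r-1\}$ can be partitioned into $k$ blocks of $b$ consecutive integers followed by $b-r$ blocks of $b-1$ consecutive integers (i.e. $V_i=\{(i-1)b,\ldots,ib-1\}$ for $1\le i\le k$ and $V_i=\{(i-1)(b-1)+k,\ldots,i(b-1)+k-1\}$ for $k+1\le i\le n+1$), and this is a proper $(n+1)$-coloring.
   Context: For integers $a\ge 2b\ge 2$, $G_{a,b}$ is the graph with vertex set $\{0,1,\ldots,a-1\}$ in which distinct $u,v$ are adjacent if and only if $u\in\{v+b,v+b+1,\ldots,v+a-b\}$ with addition modulo $a$. $\chi(G)$ denotes the chromatic number. *)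

theory Defs
  imports Main
begin

text \<open>The circular graph G_{a,b}: vertex set {0,...,a-1}; distinct u, v are adjacent
  iff u is in {v+b, ..., v+a-b} modulo a, i.e. (u - v) mod a lies in [b, a-b].\<close>
definition circ_adj :: "nat \<Rightarrow> nat \<Rightarrow> nat \<Rightarrow> nat \<Rightarrow> bool" where
  "circ_adj a b u v \<longleftrightarrow> u < a \<and> v < a \<and> u \<noteq> v \<and>
     int b \<le> (int u - int v) mod int a \<and> (int u - int v) mod int a \<le> int a - int b"

definition proper_coloring :: "nat \<Rightarrow> nat \<Rightarrow> nat \<Rightarrow> (nat \<Rightarrow> nat) \<Rightarrow> bool" where
  "proper_coloring a b k c \<longleftrightarrow> (\<forall>v<a. c v < k) \<and> (\<forall>u v. circ_adj a b u v \<longrightarrow> c u \<noteq> c v)"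

definition chromatic_number :: "nat \<Rightarrow> nat \<Rightarrow> nat" where
  "chromatic_number a b = (LEAST k. \<exists>c. proper_coloring a b k c)"

definition independent :: "nat \<Rightarrow> nat \<Rightarrow> nat set \<Rightarrow> bool" where
  "independent a b S \<longleftrightarrow> (\<forall>u\<in>S. \<forall>v\<in>S. \<not> circ_adj a b u v)"

definition block :: "nat \<Rightarrow> nat \<Rightarrow> nat \<Rightarrow> nat \<Rightarrow> nat set" where
  "block n b r i = (let k = n + r + 1 - b in
     if i \<le> k then {(i - 1) * b .. i * b - 1}
     else {(i - 1) * (b - 1) + k .. i * (b - 1) + k - 1})"

end

theory Submission
  imports Defs
begin

text \<open>Two vertices at cyclic distance less than b are never adjacent in G_{a,b}, and an
  independent set of G_{a,b} with 2b \<le> a has at most b vertices. Hence every proper colouring of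
  G_{nb+r,b} with r \<ge> 1 needs more than n colours, while the blocks, each an interval of at
  most b consecutive vertices, are independent and colouring each vertex by its block index
  uses exactly n + 1 colours.\<close>

lemma not_circ_adj_if_close:
  assumes "u < v + b" and "v < u + b"
  shows "\<not> circ_adj a b u v"
proof
  assume "circ_adj a b u v"
  then have uv: "u < a" "v < a" "u \<noteq> v"
    and lower: "int b \<le> (int u - int v) mod int a"
    and upper: "(int u - int v) mod int a \<le> int a - int b"
    by (auto simp: circ_adj_def)
  show False
  proof (cases "v < u")
    case True
    then have "(int u - int v) mod int a = int u - int v"
      using uv by (intro mod_pos_pos_trivial) auto
    then show False using lower assms by linarith
  next
    case False
    have "(int u - int v) mod int a = (int u - int v + int a) mod int a"
      by simp
    also have "\<dots> = int u - int v + int a"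
      using uv False by (intro mod_pos_pos_trivial) auto
    finally show False using upper assms by linarith
  qed
qed

lemma eq_if_diff_mod_eq_0:
  assumes "(int w - int v) mod int a = 0" and "w < a" and "v < a"
  shows "w = v"
proof -
  have "int w mod int a = int v mod int a"
    using assms(1) by (simp add: mod_eq_dvd_iff dvd_eq_mod_eq_0)
  then show ?thesis using assms(2,3) by (simp add: zmod_int)
qed

text \<open>Measure every vertex of S by its offset from a fixed u \<in> S modulo a. Independence
  keeps offsets out of [b, a - b], and folding the offsets in (a - b, a) onto (0, b) is
  injective on S because two offsets differing by exactly a - b belong to adjacent vertices.\<close>

lemma independent_card_le:
  assumes b: "0 < b" and ab: "2 * b \<le> a" and S: "S \<subseteq> {..<a}"
    and ind: "independent a b S"
  shows "card S \<le> b"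
proof (cases "S = {}")
  case False
  then obtain u where u: "u \<in> S" by auto
  define d where "d v = (int v - int u) mod int a" for v
  define g where "g v = nat (if d v < int b then d v else d v - (int a - int b))" for v
  have a_pos: "0 < a" using S u by auto
  have offset: "0 \<le> d v \<and> d v < int a \<and> (d v < int b \<or> int a - int b < d v)" if "v \<in> S" for v
  proof -
    have "d v < int b \<or> int a - int b < d v"
    proof (cases "v = u")
      case False
      have "\<not> circ_adj a b v u" using ind that u by (auto simp: independent_def)
      then show ?thesis using False that u S by (auto simp: circ_adj_def d_def)
    qed (use b in \<open>simp add: d_def\<close>)
    then show ?thesis using a_pos by (simp add: d_def)
  qed
  have diff_mod: "(int w - int v) mod int a = (d w - d v) mod int a" for v w
    by (simp add: d_def mod_diff_eq)
  have eq_if_offsets: "v = w" if "v \<in> S" "w \<in> S" "d w - d v \<in> {0, int a - int b}" for v w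
  proof -
    have "(d w - d v) mod int a = d w - d v"
      using that(3) b ab by (auto intro: mod_pos_pos_trivial)
    then have "(int w - int v) mod int a \<in> {0, int a - int b}"
      using that(3) diff_mod[of w v] by auto
    moreover have "\<not> circ_adj a b w v" using ind that by (auto simp: independent_def)
    moreover have "w < a" "v < a" using that S by auto
    ultimately show ?thesis
      using eq_if_diff_mod_eq_0[of w v a] ab unfolding circ_adj_def by fastforce
  qed
  have "inj_on g S"
  proof (rule inj_onI)
    fix v w assume v: "v \<in> S" and w: "w \<in> S" and "g v = g w"
    then have "d w - d v \<in> {0, int a - int b} \<or> d v - d w \<in> {0, int a - int b}"
      using offset[OF v] offset[OF w] ab unfolding g_def by (auto split: if_splits)
    then show "v = w" using eq_if_offsets v w by blast
  qed
  moreover have "g ` S \<subseteq> {..<b}"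
  proof (clarsimp)
    fix v assume "v \<in> S"
    then show "g v < b" using offset[of v] unfolding g_def by auto
  qed
  ultimately show ?thesis using card_inj_on_le[of g S "{..<b}"] by simp
qed simp

lemma independent_color_class:
  assumes "proper_coloring a b k c"
  shows "independent a b {v. v < a \<and> c v = j}"
  using assms unfolding proper_coloring_def independent_def by blast

lemma proper_coloring_size_le:
  assumes c: "proper_coloring a b k c" and b: "0 < b" and ab: "2 * b \<le> a"
  shows "a \<le> k * b"
proof -
  have "{..<a} \<subseteq> (\<Union>j<k. {v. v < a \<and> c v = j})"
    using c by (auto simp: proper_coloring_def)
  then have "card {..<a} \<le> card (\<Union>j<k. {v. v < a \<and> c v = j})"
    by (intro card_mono) auto
  also have "\<dots> \<le> (\<Sum>j<k. card {v. v < a \<and> c v = j})"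
    by (rule card_UN_le) simp
  also have "\<dots> \<le> (\<Sum>j<k. b)"
    by (intro sum_mono independent_card_le[OF b ab] independent_color_class[OF c]) auto
  finally show ?thesis by simp
qed

lemma chromatic_number_eqI:
  assumes c: "proper_coloring a b k c" and b: "0 < b" and ab: "2 * b \<le> a"
    and tight: "(k - 1) * b < a"
  shows "chromatic_number a b = k"
  unfolding chromatic_number_def
proof (rule Least_equality)
  fix k' assume "\<exists>c. proper_coloring a b k' c"
  then have "a \<le> k' * b" using proper_coloring_size_le b ab by blast
  then have "k - 1 < k'" using tight mult_le_mono1[of k' "k - 1" b] by linarith
  then show "k \<le> k'" by simp
qed (use c in blast)

lemma mem_interval_iff_div:
  assumes "0 < (d::nat)"
  shows "x \<in> {c + q * d ..< c + Suc q * d} \<longleftrightarrow> c \<le> x \<and> (x - c) div d = q"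
proof -
  have "y div d = q \<longleftrightarrow> q * d \<le> y \<and> y < Suc q * d" for y
    using assms by (metis div_less_iff_less_mult le_less_Suc_eq
        less_eq_div_iff_mult_less_eq nat_le_linear)
  then show ?thesis by force
qed

lemma block_Suc_long:
  assumes "0 < b" and "j < n + r + 1 - b"
  shows "block n b r (Suc j) = {j * b ..< Suc j * b}"
proof -
  have "Suc j * b - 1 = j * b + (b - 1)" using assms(1) by (simp add: algebra_simps)
  then show ?thesis using assms by (auto simp: block_def)
qed

lemma block_Suc_short:
  assumes "2 \<le> b"
  shows "block n b r (Suc (n + r + 1 - b + m)) =
    {(n + r + 1 - b) * b + m * (b - 1) ..< (n + r + 1 - b) * b + Suc m * (b - 1)}"
proof -
  define k where "k = n + r + 1 - b"
  have lo: "(k + m) * (b - 1) + k = k * b + m * (b - 1)"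
    using assms by (cases b) (simp_all add: algebra_simps)
  have hi: "Suc (k + m) * (b - 1) + k - 1 = k * b + m * (b - 1) + (b - 2)"
    using assms by (cases b) (simp_all add: algebra_simps)
  have "block n b r (Suc (k + m)) = {k * b + m * (b - 1) .. k * b + m * (b - 1) + (b - 2)}"
    unfolding block_def Let_def k_def[symmetric] using lo hi by simp
  also have "\<dots> = {k * b + m * (b - 1) ..< k * b + Suc m * (b - 1)}"
    using assms by auto
  finally show ?thesis by (simp add: k_def)
qed

lemma block_width:
  assumes "2 \<le> b" and "0 < i" and "u \<in> block n b r i" and "v \<in> block n b r i"
  shows "u < v + b"
proof -
  define k where "k = n + r + 1 - b"
  obtain j where i: "i = Suc j" using assms(2) gr0_implies_Suc by blast
  show ?thesis
  proof (cases "j < k")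
    case True
    then show ?thesis using assms block_Suc_long[of b j n r] by (simp add: i k_def)
  next
    case False
    then obtain m where "j = k + m" using le_Suc_ex not_less by blast
    have "u \<in> {k * b + m * (b - 1) ..< k * b + Suc m * (b - 1)}"
      "v \<in> {k * b + m * (b - 1) ..< k * b + Suc m * (b - 1)}"
      using assms block_Suc_short[of b n r m] \<open>j = k + m\<close> by (simp_all add: i k_def)
    then show ?thesis by (simp only: atLeastLessThan_iff mult_Suc) linarith
  qed
qed

lemma independent_block:
  assumes "2 \<le> b" and "0 < i"
  shows "independent a b (block n b r i)"
  using block_width[OF assms] not_circ_adj_if_close unfolding independent_def by blast

text \<open>The colour of a vertex is the index of its block, counted from 0.\<close>

definition block_color :: "nat \<Rightarrow> nat \<Rightarrow> nat \<Rightarrow> nat \<Rightarrow> nat" where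
  "block_color n b r v = (let k = n + r + 1 - b in
     if v < k * b then v div b else k + (v - k * b) div (b - 1))"

context
  fixes n b r :: nat
  assumes two_le_b: "2 \<le> b" and r_less_b: "r < b" and b_le: "b \<le> n + r + 1"
begin

lemma vertex_count_split: "n * b + r = (n + r + 1 - b) * b + (b - r) * (b - 1)"
proof -
  obtain c where c: "b = r + Suc c" using r_less_b less_iff_Suc_add by auto
  define k where "k = n + r + 1 - b"
  have n: "n = k + c" using b_le c k_def by simp
  show ?thesis unfolding k_def[symmetric] n c by (simp add: algebra_simps)
qed

lemma block_color_le:
  assumes "v < n * b + r"
  shows "block_color n b r v \<le> n"
proof -
  define k where "k = n + r + 1 - b"
  show ?thesis
  proof (cases "v < k * b")
    case True
    then have "v div b < k" by (simp add: less_mult_imp_div_less)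
    then show ?thesis using True r_less_b by (simp add: block_color_def k_def)
  next
    case False
    have "v < k * b + (b - r) * (b - 1)"
      using assms vertex_count_split by (simp add: k_def)
    then have "v - k * b < (b - r) * (b - 1)" using False by linarith
    then have "(v - k * b) div (b - 1) < b - r" by (simp add: less_mult_imp_div_less)
    then show ?thesis using False b_le by (simp add: block_color_def Let_def k_def)
  qed
qed

lemma mem_block_iff:
  assumes "i \<in> {1..n + 1}"
  shows "v \<in> block n b r i \<longleftrightarrow> v < n * b + r \<and> block_color n b r v = i - 1"
proof -
  define k where "k = n + r + 1 - b"
  obtain j where i: "i = Suc j" and "j \<le> n" using assms by (cases i) auto
  have color_long: "block_color n b r v = v div b" if "v < k * b"
    using that by (simp add: block_color_def k_def)
  have color_short: "block_color n b r v = k + (v - k * b) div (b - 1)" if "\<not> v < k * b"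
    using that by (simp add: block_color_def Let_def k_def)
  have "k * b \<le> n * b + r" using vertex_count_split k_def by simp
  show ?thesis
  proof (cases "j < k")
    case True
    have "v \<in> block n b r i \<longleftrightarrow> v div b = j"
      using mem_interval_iff_div[of b v 0 j] two_le_b True
      by (simp add: i k_def block_Suc_long)
    also have "\<dots> \<longleftrightarrow> v < n * b + r \<and> block_color n b r v = j"
    proof (cases "v < k * b")
      case True
      with \<open>k * b \<le> n * b + r\<close> show ?thesis by (simp add: color_long)
    next
      case False
      then have "k \<le> v div b" using two_le_b by (simp add: less_eq_div_iff_mult_less_eq)
      then show ?thesis using False \<open>j < k\<close> by (simp add: color_short)
    qed
    finally show ?thesis by (simp add: i)
  next
    case False
    define m where "m = j - k"
    have j: "j = k + m" using False m_def by simp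
    have "Suc m * (b - 1) \<le> (b - r) * (b - 1)"
      using \<open>j \<le> n\<close> b_le r_less_b by (intro mult_le_mono1) (simp add: j k_def)
    then have short_end: "k * b + Suc m * (b - 1) \<le> n * b + r"
      using vertex_count_split k_def by simp
    have "v \<in> block n b r i \<longleftrightarrow> k * b \<le> v \<and> (v - k * b) div (b - 1) = m"
      using mem_interval_iff_div[of "b - 1" v "k * b" m] two_le_b block_Suc_short[OF two_le_b]
      by (simp add: i j k_def)
    also have "\<dots> \<longleftrightarrow> v < n * b + r \<and> block_color n b r v = j"
    proof (cases "v < k * b")
      case True
      then show ?thesis using False less_mult_imp_div_less[of v k b] by (simp add: color_long)
    next
      case False
      have "v < n * b + r" if "(v - k * b) div (b - 1) = m"
      proof -
        have "v \<in> {k * b + m * (b - 1) ..< k * b + Suc m * (b - 1)}"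
          using mem_interval_iff_div[of "b - 1" v "k * b" m] two_le_b False that by simp
        then show ?thesis using short_end by (simp only: atLeastLessThan_iff) linarith
      qed
      then show ?thesis using False by (auto simp: color_short j)
    qed
    finally show ?thesis by (simp add: i)
  qed
qed

lemma proper_coloring_block_color: "proper_coloring (n * b + r) b (n + 1) (block_color n b r)"
  unfolding proper_coloring_def
proof (intro conjI allI impI)
  fix v assume "v < n * b + r"
  then show "block_color n b r v < n + 1" using block_color_le by (simp add: less_Suc_eq_le)
next
  fix u v assume adj: "circ_adj (n * b + r) b u v"
  then have "u < n * b + r" "v < n * b + r" by (auto simp: circ_adj_def)
  show "block_color n b r u \<noteq> block_color n b r v"
  proof
    assume same: "block_color n b r u = block_color n b r v"
    define i where "i = Suc (block_color n b r u)"
    have i: "i \<in> {1..n + 1}" using block_color_le \<open>u < n * b + r\<close> by (simp add: i_def)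
    have "u \<in> block n b r i" "v \<in> block n b r i"
      using mem_block_iff[OF i] \<open>u < _\<close> \<open>v < _\<close> same by (simp_all add: i_def)
    then show False
      using independent_block[OF two_le_b, of i "n * b + r" n r] adj
      by (auto simp: independent_def i_def)
  qed
qed

lemma blocks_cover: "(\<Union>i\<in>{1..n + 1}. block n b r i) = {0..n * b + r - 1}"
proof -
  have "0 < n * b + r" using vertex_count_split two_le_b r_less_b by simp
  then have "{0..n * b + r - 1} = {..<n * b + r}"
    by (metis Suc_pred' atLeast0AtMost lessThan_Suc_atMost)
  moreover have "v \<in> (\<Union>i\<in>{1..n + 1}. block n b r i) \<longleftrightarrow> v < n * b + r" for v
  proof
    assume "v \<in> (\<Union>i\<in>{1..n + 1}. block n b r i)"
    then obtain i where "i \<in> {1..n + 1}" and "v \<in> block n b r i" by blast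
    then show "v < n * b + r" using mem_block_iff by blast
  next
    assume v: "v < n * b + r"
    define i where "i = Suc (block_color n b r v)"
    have i: "i \<in> {1..n + 1}" using block_color_le[OF v] by (simp add: i_def)
    then have "v \<in> block n b r i" using mem_block_iff[OF i] v by (simp add: i_def)
    with i show "v \<in> (\<Union>i\<in>{1..n + 1}. block n b r i)" by blast
  qed
  ultimately show ?thesis by blast
qed

lemma blocks_disjoint:
  assumes "i \<in> {1..n + 1}" and "j \<in> {1..n + 1}" and "i \<noteq> j"
  shows "block n b r i \<inter> block n b r j = {}"
proof (rule ccontr)
  assume "block n b r i \<inter> block n b r j \<noteq> {}"
  then obtain v where "v \<in> block n b r i" "v \<in> block n b r j" by blast
  then have "block_color n b r v = i - 1" "block_color n b r v = j - 1"
    using mem_block_iff[OF assms(1)] mem_block_iff[OF assms(2)] by blast+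
  then have "i - 1 = j - 1" by simp
  then show False using assms by auto
qed

end

theorem mainTheorem8:
  fixes n b r :: nat
  assumes "n \<ge> 2" and "b \<ge> 2" and "1 \<le> r" and "r < b" and "int n \<ge> int b - int r - 1"
  shows "chromatic_number (n * b + r) b = n + 1
    \<and> (\<Union>i\<in>{1..n+1}. block n b r i) = {0..n * b + r - 1}
    \<and> (\<forall>i\<in>{1..n+1}. \<forall>j\<in>{1..n+1}. i \<noteq> j \<longrightarrow> block n b r i \<inter> block n b r j = {})
    \<and> (\<forall>i\<in>{1..n+1}. independent (n * b + r) b (block n b r i))"
proof -
  have b_le: "b \<le> n + r + 1" using assms(5) by linarith
  have "2 * b \<le> n * b + r" using assms(1) mult_le_mono1[of 2 n b] by linarith
  moreover have "(n + 1 - 1) * b < n * b + r" using assms(3) by simp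
  ultimately have "chromatic_number (n * b + r) b = n + 1"
    using chromatic_number_eqI proper_coloring_block_color[OF assms(2,4) b_le] assms(2) by simp
  then show ?thesis
    using blocks_cover[OF assms(2,4) b_le] blocks_disjoint[OF assms(2,4) b_le]
      independent_block[OF assms(2)] by auto
qed

end
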